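(* Let $\lambda=(\lambda_1,\ldots,\lambda_n)\in\mathbb{R}_{<0}^n$ have pairwise distinct entries. Then $\nu_{0,\lambda}(t)\le 1$ and $\dot\nu_{0,\lambda}(t)\le 0$ for all $t\ge 0$, and $\nu_{0,\lambda}(0)=1$.
   Context: $V_\lambda$ is the $n\times n$ Vandermonde matrix with $(i,j)$ entry $\lambda_j^{i-1}$, and $[\nu_{0,\lambda}(t),\ldots,\nu_{n-1,\lambda}(t)]=[e^{\lambda_1 t},\ldots,e^{\lambda_n t}]V_\lambda^{-1}$. *)

theory Defs
  imports "HOL-Analysis.Analysis" "Jordan_Normal_Form.Gauss_Jordan_Elimination"
begin

text \<open>Vandermonde matrix V_lambda (0-indexed): entry (i,j) is lambda_j ^ i
  (i.e. lambda_j^(i-1) in the paper's 1-indexed convention).\<close>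
definition vandermonde :: "nat \<Rightarrow> (nat \<Rightarrow> real) \<Rightarrow> real mat" where
  "vandermonde n lam = mat n n (\<lambda>(i, j). lam j ^ i)"

definition vandermonde_inv :: "nat \<Rightarrow> (nat \<Rightarrow> real) \<Rightarrow> real mat" where
  "vandermonde_inv n lam = the (mat_inverse (vandermonde n lam))"

text \<open>[nu_0(t),...,nu_{n-1}(t)] = [e^{lambda_1 t},...,e^{lambda_n t}] V^{-1};
  nu k is the k-th (0-indexed) entry of this row vector.\<close>
definition nu :: "nat \<Rightarrow> nat \<Rightarrow> (nat \<Rightarrow> real) \<Rightarrow> real \<Rightarrow> real" where
  "nu n k lam t = (\<Sum>j<n. exp (lam j * t) * vandermonde_inv n lam $$ (j, k))"

end

(* The first column w of the inverse Vandermonde matrix has power moments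
   sum_j lam_j^i w_j = [i = 0] for i < n, and pairing w with the values of
   q = prod_k (x - lam_k) at the nodes shows that its n-th moment is
   -prod_k (-lam_k) < 0.  Hence nu_0(0) = sum_j w_j = 1, and
   -nu_0'(t) = sum_j c_j exp (lam_j t) with c_j = -lam_j w_j, whose moments of
   order < n - 1 vanish and whose moment of order n - 1 is positive.  Such an
   exponential sum is nonnegative for t >= 0, so nu_0 is nonincreasing. *)
theory Submission
  imports Defs "Jordan_Normal_Form.Determinant"
begin

definition moment :: "nat \<Rightarrow> (nat \<Rightarrow> real) \<Rightarrow> (nat \<Rightarrow> real) \<Rightarrow> nat \<Rightarrow> real" where
  "moment n lam c i = (\<Sum>j<n. lam j ^ i * c j)"

lemma moment_mult_shifted_node:
  "moment n lam (\<lambda>j. (lam j - L) * c j) i = moment n lam c (Suc i) - L * moment n lam c i"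
proof -
  have "moment n lam (\<lambda>j. (lam j - L) * c j) i
      = (\<Sum>j<n. lam j ^ Suc i * c j - L * (lam j ^ i * c j))"
    unfolding moment_def by (rule sum.cong) (auto simp: algebra_simps)
  then show ?thesis
    by (simp only: moment_def sum_subtractf sum_distrib_left)
qed

lemma exp_sum_has_real_derivative:
  "((\<lambda>t. \<Sum>j<n. c j * exp (lam j * t))
     has_real_derivative (\<Sum>j<n. lam j * c j * exp (lam j * t))) (at t)"
  by (auto intro!: derivative_eq_intros sum.cong simp: algebra_simps)

text \<open>Induction on the number of terms: multiplying by \<open>exp (- L * t)\<close>, \<open>L\<close> the last node,
  and differentiating removes the last term and replaces \<open>c j\<close> by \<open>(lam j - L) * c j\<close>,
  whose moments again satisfy the hypotheses.\<close>
lemma exp_sum_nonneg_if_moments_vanish: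
  assumes "\<And>i. i < m \<Longrightarrow> moment (Suc m) lam c i = 0"
    and "moment (Suc m) lam c m \<ge> 0"
    and "t \<ge> 0"
  shows "(\<Sum>j<Suc m. c j * exp (lam j * t)) \<ge> 0"
  using assms
proof (induction m arbitrary: c t)
  case 0
  then show ?case by (simp add: moment_def)
next
  case (Suc m)
  define L where "L = lam (Suc m)"
  define c' where "c' = (\<lambda>j. (lam j - L) * c j)"
  have moment_c': "moment (Suc m) lam c' i
      = moment (Suc (Suc m)) lam c (Suc i) - L * moment (Suc (Suc m)) lam c i" for i
  proof -
    have "moment (Suc m) lam c' i = moment (Suc (Suc m)) lam c' i"
      by (simp add: moment_def c'_def L_def)
    also have "\<dots> = moment (Suc (Suc m)) lam c (Suc i) - L * moment (Suc (Suc m)) lam c i"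
      unfolding c'_def by (rule moment_mult_shifted_node)
    finally show ?thesis .
  qed
  have c'_nonneg: "(\<Sum>j<Suc m. c' j * exp (lam j * s)) \<ge> 0" if "s \<ge> 0" for s
    by (rule Suc.IH) (use Suc.prems that in \<open>auto simp: moment_c'\<close>)
  define g where "g s = exp (- L * s) * (\<Sum>j<Suc (Suc m). c j * exp (lam j * s))" for s
  have g_deriv: "(g has_real_derivative exp (- L * s) * (\<Sum>j<Suc m. c' j * exp (lam j * s))) (at s)" for s
  proof -
    have "(g has_real_derivative exp (- L * s) * (- L) * (\<Sum>j<Suc (Suc m). c j * exp (lam j * s))
       + exp (- L * s) * (\<Sum>j<Suc (Suc m). lam j * c j * exp (lam j * s))) (at s)"
      unfolding g_def
      by (auto intro!: derivative_eq_intros sum.cong simp: algebra_simps)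
    moreover have "exp (- L * s) * (- L) * (\<Sum>j<Suc (Suc m). c j * exp (lam j * s))
       + exp (- L * s) * (\<Sum>j<Suc (Suc m). lam j * c j * exp (lam j * s))
       = exp (- L * s) * (\<Sum>j<Suc m. c' j * exp (lam j * s))"
      by (simp add: c'_def L_def sum_distrib_left sum.distrib[symmetric] algebra_simps)
    ultimately show ?thesis by simp
  qed
  have "g 0 = 0"
    using Suc.prems(1)[of 0] by (simp add: g_def moment_def)
  moreover have "g 0 \<le> g t"
    by (rule DERIV_nonneg_imp_nondecreasing[OF Suc.prems(3)])
       (use g_deriv c'_nonneg in \<open>blast intro: mult_nonneg_nonneg less_imp_le[OF exp_gt_zero]\<close>)
  ultimately show ?case
    by (simp add: g_def zero_le_mult_iff)
qed

lemma moment_top_if_unit_moments: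
  assumes "n \<ge> 1"
    and unit: "\<And>i. i < n \<Longrightarrow> moment n lam w i = (if i = 0 then 1 else 0)"
  shows "moment n lam w n = - (\<Prod>k<n. - lam k)"
proof -
  define q where "q = (\<Prod>k<n. [:- lam k, 1:])"
  have degree_q: "degree q = n"
    unfolding q_def by (subst degree_prod_eq_sum_degree) auto
  have lead_q: "coeff q n = 1"
    using lead_coeff_prod[of "\<lambda>k. [:- lam k, 1:]" "{..<n}"] degree_q by (simp add: q_def)
  have const_q: "coeff q 0 = (\<Prod>k<n. - lam k)"
    by (simp add: q_def poly_0_coeff_0[symmetric] poly_prod)
  have "poly q (lam j) = 0" if "j < n" for j
    using that by (auto simp: q_def poly_prod)
  then have "0 = (\<Sum>j<n. w j * poly q (lam j))"
    by simp
  also have "\<dots> = (\<Sum>i\<le>n. coeff q i * moment n lam w i)"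
    by (simp add: poly_altdef degree_q moment_def sum_distrib_left sum_distrib_right
        algebra_simps sum.swap[of _ "{..n}"])
  also have "\<dots> = (\<Sum>i<n. coeff q i * moment n lam w i) + coeff q n * moment n lam w n"
    by (simp add: lessThan_Suc_atMost[symmetric])
  also have "(\<Sum>i<n. coeff q i * moment n lam w i) = (\<Sum>i<n. if i = 0 then coeff q i else 0)"
    by (rule sum.cong) (simp_all add: unit)
  also have "\<dots> = coeff q 0"
    using assms(1) by (simp add: sum.delta)
  finally show ?thesis
    using lead_q const_q by simp
qed

lemma poly_eq_0_if_distinct_roots:
  fixes p :: "'a :: idom poly"
  assumes "degree p < n"
    and "inj_on x {..<n}"
    and "\<And>j. j < n \<Longrightarrow> poly p (x j) = 0"
  shows "p = 0"
proof (rule ccontr)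
  assume "p \<noteq> 0"
  have "n = card (x ` {..<n})"
    using card_image[OF assms(2)] by simp
  also have "\<dots> \<le> card {r. poly p r = 0}"
    using assms(3) poly_roots_finite[OF \<open>p \<noteq> 0\<close>] by (intro card_mono) auto
  also have "\<dots> \<le> degree p"
    using \<open>p \<noteq> 0\<close> by (rule card_poly_roots_bound)
  finally show False
    using assms(1) by simp
qed

lemma det_vandermonde_neq_0:
  assumes "inj_on lam {..<n}"
  shows "det (vandermonde n lam) \<noteq> 0"
proof
  let ?V = "vandermonde n lam"
  have V: "?V \<in> carrier_mat n n" by (simp add: vandermonde_def)
  assume "det ?V = 0"
  then have "det (transpose_mat ?V) = 0" by (simp add: det_transpose[OF V])
  then obtain v where v: "v \<in> carrier_vec n" "v \<noteq> 0\<^sub>v n" "transpose_mat ?V *\<^sub>v v = 0\<^sub>v n"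
    using det_0_iff_vec_prod_zero_field[of "transpose_mat ?V" n] V by auto
  then have "n \<ge> 1"
    by (cases n) auto
  define p where "p = (\<Sum>i<n. monom (v $ i) i)"
  have "poly p (lam j) = 0" if "j < n" for j
  proof -
    have "poly p (lam j) = (transpose_mat ?V *\<^sub>v v) $ j"
      using that V v(1)
      by (simp add: p_def poly_sum poly_monom scalar_prod_def vandermonde_def atLeast0LessThan
          mult.commute)
    then show ?thesis using v(3) that by simp
  qed
  moreover have "degree p \<le> n - 1"
    unfolding p_def by (rule degree_sum_le) (auto intro: order.trans[OF degree_monom_le])
  then have "degree p < n"
    using \<open>n \<ge> 1\<close> by linarith
  ultimately have "p = 0"
    using poly_eq_0_if_distinct_roots assms by blast
  have "v = 0\<^sub>v n"
  proof (rule eq_vecI)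
    fix i assume "i < dim_vec (0\<^sub>v n)"
    then have "coeff p i = v $ i"
      by (simp add: p_def coeff_sum coeff_monom sum.delta)
    then show "v $ i = 0\<^sub>v n $ i"
      using \<open>p = 0\<close> \<open>i < dim_vec (0\<^sub>v n)\<close> by simp
  qed (use v in simp)
  then show False using v by simp
qed

lemma vandermonde_mult_inv:
  assumes "inj_on lam {..<n}"
  shows "vandermonde n lam * vandermonde_inv n lam = 1\<^sub>m n"
    and "vandermonde_inv n lam \<in> carrier_mat n n"
proof -
  let ?V = "vandermonde n lam"
  have V: "?V \<in> carrier_mat n n" by (simp add: vandermonde_def)
  have "?V \<in> Units (ring_mat TYPE(real) n ())"
    by (rule det_non_zero_imp_unit[OF V det_vandermonde_neq_0[OF assms]])
  then obtain B where "mat_inverse ?V = Some B"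
    using mat_inverse(1)[OF V, of "()"] by (cases "mat_inverse ?V") auto
  then show "?V * vandermonde_inv n lam = 1\<^sub>m n" "vandermonde_inv n lam \<in> carrier_mat n n"
    using mat_inverse(2)[OF V] by (auto simp: vandermonde_inv_def)
qed

lemma moment_vandermonde_inv_col_0:
  assumes "inj_on lam {..<n}" and "i < n"
  shows "moment n lam (\<lambda>j. vandermonde_inv n lam $$ (j, 0)) i = (if i = 0 then 1 else 0)"
proof -
  let ?W = "vandermonde_inv n lam"
  have "moment n lam (\<lambda>j. ?W $$ (j, 0)) i = (vandermonde n lam * ?W) $$ (i, 0)"
    using assms vandermonde_mult_inv(2)[OF assms(1)]
    by (simp add: moment_def scalar_prod_def vandermonde_def row_def col_def atLeast0LessThan)
  also have "\<dots> = (if i = 0 then 1 else 0)"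
    using assms by (simp add: vandermonde_mult_inv(1))
  finally show ?thesis .
qed

lemma exp_sum_deriv_nonpos:
  assumes "n \<ge> 1"
    and "\<And>i. 0 < i \<Longrightarrow> i < n \<Longrightarrow> moment n lam w i = 0"
    and "moment n lam w n \<le> 0"
    and "t \<ge> 0"
  shows "(\<Sum>j<n. lam j * w j * exp (lam j * t)) \<le> 0"
proof -
  obtain m where n: "n = Suc m"
    using assms(1) by (cases n) auto
  have moment_c: "moment n lam (\<lambda>j. - (lam j * w j)) i = - moment n lam w (Suc i)" for i
    by (simp add: moment_def sum_negf[symmetric] algebra_simps)
  have "(\<Sum>j<Suc m. - (lam j * w j) * exp (lam j * t)) \<ge> 0"
    by (rule exp_sum_nonneg_if_moments_vanish) (use assms n moment_c in auto)
  then show ?thesis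
    by (simp add: n sum_negf)
qed

theorem proposition9:
  fixes n :: nat and lam :: "nat \<Rightarrow> real"
  assumes "n \<ge> 1"
    and "\<And>j. j < n \<Longrightarrow> lam j < 0"
    and "inj_on lam {..<n}"
  shows "(\<forall>t\<ge>0. nu n 0 lam t \<le> 1 \<and> deriv (nu n 0 lam) t \<le> 0) \<and> nu n 0 lam 0 = 1"
proof -
  define w where "w j = vandermonde_inv n lam $$ (j, 0)" for j
  have unit: "moment n lam w i = (if i = 0 then 1 else 0)" if "i < n" for i
    unfolding w_def using moment_vandermonde_inv_col_0[OF assms(3) that] .
  have "(\<Prod>k<n. - lam k) > 0"
    using assms(2) by (intro prod_pos) auto
  then have top: "moment n lam w n \<le> 0"
    using moment_top_if_unit_moments[OF assms(1) unit] by simp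
  have nu_eq: "nu n 0 lam = (\<lambda>t. \<Sum>j<n. w j * exp (lam j * t))"
    by (simp add: nu_def w_def fun_eq_iff mult.commute)
  have deriv_nonpos: "(\<Sum>j<n. lam j * w j * exp (lam j * t)) \<le> 0" if "t \<ge> 0" for t
    using exp_sum_deriv_nonpos[OF assms(1) _ top that] unit by simp
  have nu_0: "nu n 0 lam 0 = 1"
    using unit[of 0] assms(1) by (simp add: nu_eq moment_def mult.commute)
  have "nu n 0 lam t \<le> nu n 0 lam 0" if "t \<ge> 0" for t
    using DERIV_nonpos_imp_nonincreasing[OF that] exp_sum_has_real_derivative deriv_nonpos
    unfolding nu_eq by fastforce
  moreover have "deriv (nu n 0 lam) t \<le> 0" if "t \<ge> 0" for t
    using DERIV_imp_deriv[OF exp_sum_has_real_derivative[where c = w]] deriv_nonpos[OF that]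
    unfolding nu_eq by simp
  ultimately show ?thesis
    using nu_0 by simp
qed

end
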